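(* Let $\Gamma$ be a Veldkamp $n$-gon ($n\ge 2$). Then for every two edges $e_1,e_2$ of $\Gamma$ there exists an edge of $\Gamma$ that is opposite both $e_1$ and $e_2$. Consequently, for any two vertices $u,v$ with ${\rm dist}(u,v)$ even, $u^{\rm op}\cap v^{\rm op}\neq\emptyset$.
   Context: A graph is a pair $(V,E)$ with $E$ a set of $2$-element subsets of $V$; $\Gamma_v$ is the set of neighbors of $v$. An $s$-path is a sequence $(x_0,\dots,x_s)$ of vertices with consecutive vertices adjacent and $x_{i-2}\ne x_i$ for $i\in[2,s]$; ${\rm dist}$ is graph distance. A closed $s$-path is an $s$-path with $s\ge3$ whose first and last vertices coincide; an $s$-circuit is the subgraph determined by a closed $s$-path. An opposition relation on a set $X$ is a symmetric anti-reflexive relation; it is $k$-plump if for every $S\subseteq X$ with $|S|\le k$ some element of $X$ is related to all elements of $S$. A Veldkamp graph is a graph with a $2$-plump opposition relation $\equiv_v$ on $\Gamma_v$ for each vertex $v$. A path $(v_0,\dots,v_s)$ is straight if $v_{i-1}\equiv_{v_i}v_{i+1}$ for all $i\in[1,s-1]$; a circuit is straight if every path in it is straight. A Veldkamp $n$-gon ($n\ge2$) is a Veldkamp graph satisfying (VP1) connected and bipartite; (VP2) for each $k\in[1,n-1]$ each straight $k$-path is the unique straight path between its endpoints of length at most $k$; (VP3) every straight $(n+1)$-path lies in a straight $2n$-circuit. A root is a straight $n$-path. Two vertices $x,y$ are opposite if there is a root from $x$ to $y$; $x^{\rm op}$ denotes the set of vertices opposite $x$. Two edges $e,f$ are opposite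 if there is a straight $(n+1)$-path whose first edge is $e$ and whose last edge is $f$. *)

theory Defs
  imports Main
begin

text \<open>For each vertex v, opp v is the opposition relation on the neighbourhood of v
(opp v x y means x is opposite y at v).\<close>

definition graph :: "'a set \<Rightarrow> ('a \<Rightarrow> 'a \<Rightarrow> bool) \<Rightarrow> bool" where
  "graph V adj \<longleftrightarrow> (\<forall>x y. adj x y \<longrightarrow> x \<in> V \<and> y \<in> V \<and> x \<noteq> y \<and> adj y x)"

definition nbrs :: "('a \<Rightarrow> 'a \<Rightarrow> bool) \<Rightarrow> 'a \<Rightarrow> 'a set" where
  "nbrs adj v = {x. adj v x}"

definition graph_edges :: "('a \<Rightarrow> 'a \<Rightarrow> bool) \<Rightarrow> 'a set set" where
  "graph_edges adj = {{x, y} | x y. adj x y}"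

definition opposition_rel :: "'a set \<Rightarrow> ('a \<Rightarrow> 'a \<Rightarrow> bool) \<Rightarrow> bool" where
  "opposition_rel X R \<longleftrightarrow> (\<forall>x y. R x y \<longrightarrow> x \<in> X \<and> y \<in> X \<and> R y x) \<and> (\<forall>x. \<not> R x x)"

definition plump :: "nat \<Rightarrow> 'a set \<Rightarrow> ('a \<Rightarrow> 'a \<Rightarrow> bool) \<Rightarrow> bool" where
  "plump k X R \<longleftrightarrow> (\<forall>S. S \<subseteq> X \<and> finite S \<and> card S \<le> k \<longrightarrow> (\<exists>x\<in>X. \<forall>y\<in>S. R x y))"

definition veldkamp_graph :: "'a set \<Rightarrow> ('a \<Rightarrow> 'a \<Rightarrow> bool) \<Rightarrow> ('a \<Rightarrow> 'a \<Rightarrow> 'a \<Rightarrow> bool) \<Rightarrow> bool" where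
  "veldkamp_graph V adj opp \<longleftrightarrow> graph V adj \<and>
     (\<forall>v\<in>V. opposition_rel (nbrs adj v) (opp v) \<and> plump 2 (nbrs adj v) (opp v))"

definition is_path :: "'a set \<Rightarrow> ('a \<Rightarrow> 'a \<Rightarrow> bool) \<Rightarrow> 'a list \<Rightarrow> nat \<Rightarrow> bool" where
  "is_path V adj xs s \<longleftrightarrow> length xs = Suc s \<and> set xs \<subseteq> V \<and>
     (\<forall>i<s. adj (xs ! i) (xs ! Suc i)) \<and>
     (\<forall>i. 2 \<le> i \<and> i \<le> s \<longrightarrow> xs ! (i - 2) \<noteq> xs ! i)"

definition straight :: "('a \<Rightarrow> 'a \<Rightarrow> 'a \<Rightarrow> bool) \<Rightarrow> 'a list \<Rightarrow> bool" where
  "straight opp xs \<longleftrightarrow> (\<forall>i. 1 \<le> i \<and> Suc i < length xs \<longrightarrow> opp (xs ! i) (xs ! (i - 1)) (xs ! Suc i))"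

definition closed_path :: "'a set \<Rightarrow> ('a \<Rightarrow> 'a \<Rightarrow> bool) \<Rightarrow> 'a list \<Rightarrow> nat \<Rightarrow> bool" where
  "closed_path V adj xs s \<longleftrightarrow> is_path V adj xs s \<and> 3 \<le> s \<and> xs ! 0 = xs ! s"

definition circ_edges :: "'a list \<Rightarrow> 'a set set" where
  "circ_edges c = {{c ! i, c ! Suc i} | i. Suc i < length c}"

definition path_in_circuit :: "'a list \<Rightarrow> 'a list \<Rightarrow> bool" where
  "path_in_circuit c p \<longleftrightarrow> set p \<subseteq> set c \<and> (\<forall>i. Suc i < length p \<longrightarrow> {p ! i, p ! Suc i} \<in> circ_edges c)"

definition straight_circuit :: "'a set \<Rightarrow> ('a \<Rightarrow> 'a \<Rightarrow> bool) \<Rightarrow> ('a \<Rightarrow> 'a \<Rightarrow> 'a \<Rightarrow> bool) \<Rightarrow> 'a list \<Rightarrow> bool" where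
  "straight_circuit V adj opp c \<longleftrightarrow>
     (\<forall>p s. is_path V adj p s \<and> path_in_circuit c p \<longrightarrow> straight opp p)"

definition walk :: "'a set \<Rightarrow> ('a \<Rightarrow> 'a \<Rightarrow> bool) \<Rightarrow> 'a list \<Rightarrow> bool" where
  "walk V adj xs \<longleftrightarrow> xs \<noteq> [] \<and> set xs \<subseteq> V \<and> (\<forall>i. Suc i < length xs \<longrightarrow> adj (xs ! i) (xs ! Suc i))"

definition connected_graph :: "'a set \<Rightarrow> ('a \<Rightarrow> 'a \<Rightarrow> bool) \<Rightarrow> bool" where
  "connected_graph V adj \<longleftrightarrow> (\<forall>u\<in>V. \<forall>v\<in>V. \<exists>xs. walk V adj xs \<and> hd xs = u \<and> last xs = v)"

definition bipartite_graph :: "'a set \<Rightarrow> ('a \<Rightarrow> 'a \<Rightarrow> bool) \<Rightarrow> bool" where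
  "bipartite_graph V adj \<longleftrightarrow> (\<exists>c :: 'a \<Rightarrow> bool. \<forall>x y. adj x y \<longrightarrow> c x \<noteq> c y)"

definition gdist :: "'a set \<Rightarrow> ('a \<Rightarrow> 'a \<Rightarrow> bool) \<Rightarrow> 'a \<Rightarrow> 'a \<Rightarrow> nat" where
  "gdist V adj u v = (LEAST k. \<exists>xs. walk V adj xs \<and> length xs = Suc k \<and> hd xs = u \<and> last xs = v)"

definition veldkamp_ngon :: "'a set \<Rightarrow> ('a \<Rightarrow> 'a \<Rightarrow> bool) \<Rightarrow> ('a \<Rightarrow> 'a \<Rightarrow> 'a \<Rightarrow> bool) \<Rightarrow> nat \<Rightarrow> bool" where
  "veldkamp_ngon V adj opp n \<longleftrightarrow> 2 \<le> n \<and> veldkamp_graph V adj opp \<and>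
     \<comment> \<open>VP1\<close>
     connected_graph V adj \<and> bipartite_graph V adj \<and>
     \<comment> \<open>VP2\<close>
     (\<forall>k. 1 \<le> k \<and> k \<le> n - 1 \<longrightarrow> (\<forall>p. is_path V adj p k \<and> straight opp p \<longrightarrow>
        (\<forall>q j. is_path V adj q j \<and> j \<le> k \<and> straight opp q \<and> hd q = hd p \<and> last q = last p \<longrightarrow> q = p))) \<and>
     \<comment> \<open>VP3\<close>
     (\<forall>p. is_path V adj p (n + 1) \<and> straight opp p \<longrightarrow>
        (\<exists>c. closed_path V adj c (2 * n) \<and> straight_circuit V adj opp c \<and> path_in_circuit c p))"

definition root :: "'a set \<Rightarrow> ('a \<Rightarrow> 'a \<Rightarrow> bool) \<Rightarrow> ('a \<Rightarrow> 'a \<Rightarrow> 'a \<Rightarrow> bool) \<Rightarrow> nat \<Rightarrow> 'a list \<Rightarrow> bool" where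
  "root V adj opp n p \<longleftrightarrow> is_path V adj p n \<and> straight opp p"

definition op_set :: "'a set \<Rightarrow> ('a \<Rightarrow> 'a \<Rightarrow> bool) \<Rightarrow> ('a \<Rightarrow> 'a \<Rightarrow> 'a \<Rightarrow> bool) \<Rightarrow> nat \<Rightarrow> 'a \<Rightarrow> 'a set" where
  "op_set V adj opp n x = {y. \<exists>p. root V adj opp n p \<and> hd p = x \<and> last p = y}"

definition opposite_edges :: "'a set \<Rightarrow> ('a \<Rightarrow> 'a \<Rightarrow> bool) \<Rightarrow> ('a \<Rightarrow> 'a \<Rightarrow> 'a \<Rightarrow> bool) \<Rightarrow> nat \<Rightarrow> 'a set \<Rightarrow> 'a set \<Rightarrow> bool" where
  "opposite_edges V adj opp n e f \<longleftrightarrow> (\<exists>p. is_path V adj p (n + 1) \<and> straight opp p \<and>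
      {p ! 0, p ! 1} = e \<and> {p ! n, p ! Suc n} = f)"

end

theory Submission
  imports Defs
begin

text \<open>
A straight (n+1)-path p lies in a straight 2n-circuit (VP3); going round the circuit the
other way gives a root from p!1 through p!0 to p!(n+1), and dropping its first vertex a
straight (n-1)-path from p!0 to p!(n+1). Two straight paths of length at most n ending at
the same vertex z can therefore be extended simultaneously: 2-plumpness at z gives a
neighbour opposite both penultimate vertices, and a path that reaches length n+1 is
replaced by its shortcut of length n-1. Propagating along a walk, any two vertices u, v
are joined to a common vertex by straight paths of lengths at most n. If dist(u,v) is even,
u and v have the same colour in the bipartition, so these lengths have the same parity, and
repeated extension makes both equal to n: this is a common opposite vertex. For two edges,
take roots from suitably chosen endpoints a1, a2 to a common vertex z, turn them (again by
plumpness and rotation in circuits) to pass through the other endpoints b1, b2, and extend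
both by one edge at z opposite both penultimate vertices.
\<close>

lemma is_path_length: "is_path V adj p k \<Longrightarrow> length p = Suc k"
  by (simp add: is_path_def)

lemma is_path_adj: "is_path V adj p k \<Longrightarrow> i < k \<Longrightarrow> adj (p ! i) (p ! Suc i)"
  by (simp add: is_path_def)

lemma is_path_nth_in_V: "is_path V adj p k \<Longrightarrow> i \<le> k \<Longrightarrow> p ! i \<in> V"
  unfolding is_path_def by (metis less_Suc_eq_le nth_mem subsetD)

lemma is_path_no_backtrack: "is_path V adj p k \<Longrightarrow> 2 \<le> i \<Longrightarrow> i \<le> k \<Longrightarrow> p ! (i - 2) \<noteq> p ! i"
  by (simp add: is_path_def)

lemma is_path_hd: "is_path V adj p k \<Longrightarrow> hd p = p ! 0"
  by (cases p) (auto simp: is_path_def)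

lemma is_path_last: "is_path V adj p k \<Longrightarrow> last p = p ! k"
  by (cases p rule: rev_cases) (auto simp: is_path_def nth_append)

lemma is_path_Cons:
  assumes "is_path V adj p k" "w \<in> V" "adj w (p ! 0)" "0 < k \<Longrightarrow> w \<noteq> p ! 1"
  shows "is_path V adj (w # p) (Suc k)"
  unfolding is_path_def
proof (intro conjI allI impI)
  fix i assume i: "2 \<le> i \<and> i \<le> Suc k"
  show "(w # p) ! (i - 2) \<noteq> (w # p) ! i"
  proof (cases "i = 2")
    case False
    then obtain j where "i = Suc (Suc (Suc j))"
      using i by (intro that[of "i - 3"]) arith
    then show ?thesis using i is_path_no_backtrack[OF assms(1), of "Suc (Suc j)"] by simp
  qed (use assms(4) i in \<open>auto simp: numeral_2_eq_2\<close>)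
next
  fix i assume "i < Suc k"
  then show "adj ((w # p) ! i) ((w # p) ! Suc i)"
    using assms by (cases i) (auto simp: is_path_def)
qed (use assms in \<open>auto simp: is_path_def\<close>)

lemma straight_Cons:
  assumes "straight opp p" "1 < length p \<Longrightarrow> opp (p ! 0) w (p ! 1)"
  shows "straight opp (w # p)"
  unfolding straight_def
proof (intro allI impI)
  fix i assume "1 \<le> i \<and> Suc i < length (w # p)"
  then show "opp ((w # p) ! i) ((w # p) ! (i - 1)) ((w # p) ! Suc i)"
    using assms assms(1)[unfolded straight_def, rule_format, of "i - 1"]
    by (cases "i = 1") (auto simp: straight_def nth_Cons')
qed

lemma is_path_snoc:
  assumes "is_path V adj p k" "y \<in> V" "adj (p ! k) y" "0 < k \<Longrightarrow> p ! (k - 1) \<noteq> y"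
  shows "is_path V adj (p @ [y]) (Suc k)"
  unfolding is_path_def
proof (intro conjI allI impI)
  fix i assume "i < Suc k"
  then show "adj ((p @ [y]) ! i) ((p @ [y]) ! Suc i)"
    using assms(1,3) by (cases "i = k") (auto simp: is_path_def nth_append)
next
  fix i assume "2 \<le> i \<and> i \<le> Suc k"
  then show "(p @ [y]) ! (i - 2) \<noteq> (p @ [y]) ! i"
    using assms(1,4) by (cases "i = Suc k") (auto simp: is_path_def nth_append numeral_2_eq_2)
qed (use assms in \<open>auto simp: is_path_def\<close>)

lemma straight_snoc:
  assumes "straight opp p" "length p = Suc k" "0 < k \<Longrightarrow> opp (p ! k) (p ! (k - 1)) y"
  shows "straight opp (p @ [y])"
  unfolding straight_def
proof (intro allI impI)
  fix i assume "1 \<le> i \<and> Suc i < length (p @ [y])"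
  then show "opp ((p @ [y]) ! i) ((p @ [y]) ! (i - 1)) ((p @ [y]) ! Suc i)"
    using assms by (cases "i = k") (auto simp: straight_def nth_append)
qed

lemma is_path_tl:
  assumes "is_path V adj p (Suc k)"
  shows "is_path V adj (tl p) k"
proof -
  obtain w q where p: "p = w # q"
    using is_path_length[OF assms] by (cases p) auto
  have "q ! (i - 2) \<noteq> q ! i" if "2 \<le> i" "i \<le> k" for i
    using is_path_no_backtrack[OF assms, of "Suc i"] that by (simp add: p Suc_diff_le numeral_2_eq_2)
  then show ?thesis
    using assms by (auto simp: is_path_def p)
qed

lemma straight_tl: "straight opp p \<Longrightarrow> straight opp (tl p)"
  unfolding straight_def
  by (cases p) (auto simp: nth_Cons')

lemma two_colouring_parity:
  fixes adj :: "'a \<Rightarrow> 'a \<Rightarrow> bool" and col :: "'a \<Rightarrow> bool"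
  assumes "\<And>x y. adj x y \<Longrightarrow> col x \<noteq> col y"
    and "\<And>i. Suc i < length xs \<Longrightarrow> adj (xs ! i) (xs ! Suc i)"
    and "i < length xs"
  shows "col (xs ! i) \<longleftrightarrow> (col (xs ! 0) \<longleftrightarrow> even i)"
  using assms(3)
proof (induction i)
  case (Suc i)
  then show ?case using assms(1)[OF assms(2)] by auto
qed simp

lemma unit_cases: "\<bar>d\<bar> = 1 \<Longrightarrow> d = 1 \<or> d = (-1 :: int)"
  by linarith

text \<open>The length of a straight path of length k \<le> n after one extension step: a path
  reaching length n + 1 is replaced by its shortcut of length n - 1.\<close>

definition grow :: "nat \<Rightarrow> nat \<Rightarrow> nat" where
  "grow n k = (if k < n then Suc k else n - 1)"

lemma grow_funpow:
  assumes "k \<le> n"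
  shows "(grow n ^^ m) k = (if k + m \<le> n then k + m else if even (k + m - n) then n else n - 1)"
proof (induction m)
  case (Suc m)
  then show ?case using assms by (auto simp: grow_def)
qed (use assms in simp)

lemma grow_funpow_le: "k \<le> n \<Longrightarrow> (grow n ^^ m) k \<le> n"
  by (simp add: grow_funpow)

lemma grow_funpow_eq_top: "k \<le> n \<Longrightarrow> even (j + k) \<Longrightarrow> (grow n ^^ (n + j)) k = n"
  by (simp add: grow_funpow)

lemma gdist_even_same_colour:
  fixes col :: "'a \<Rightarrow> bool"
  assumes "connected_graph V adj" "\<And>x y. adj x y \<Longrightarrow> col x \<noteq> col y"
    and "u \<in> V" "v \<in> V" "even (gdist V adj u v)"
  shows "col u = col v"
proof -
  obtain xs where "walk V adj xs" "hd xs = u" "last xs = v"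
    using assms(1,3,4) unfolding connected_graph_def by blast
  then have "\<exists>k xs. walk V adj xs \<and> length xs = Suc k \<and> hd xs = u \<and> last xs = v"
    by (intro exI[of _ "length xs - 1"] exI[of _ xs]) (auto simp: walk_def)
  then have "\<exists>xs. walk V adj xs \<and> length xs = Suc (gdist V adj u v) \<and> hd xs = u \<and> last xs = v"
    unfolding gdist_def by (rule LeastI_ex)
  then obtain ys where ys: "walk V adj ys" "length ys = Suc (gdist V adj u v)" "hd ys = u" "last ys = v"
    by blast
  then have "ys \<noteq> []"
    by auto
  then have "ys ! 0 = u" "ys ! gdist V adj u v = v"
    using ys by (auto simp: hd_conv_nth last_conv_nth)
  then show ?thesis
    using two_colouring_parity[where adj = adj and col = col and xs = ys and i = "gdist V adj u v"]
      ys(1,2) assms(2,5)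
    by (simp add: walk_def)
qed

locale veldkamp_polygon =
  fixes V :: "'a set" and adj :: "'a \<Rightarrow> 'a \<Rightarrow> bool" and opp :: "'a \<Rightarrow> 'a \<Rightarrow> 'a \<Rightarrow> bool" and n :: nat
  assumes veldkamp_ngon: "veldkamp_ngon V adj opp n"
begin

lemma two_le_n: "2 \<le> n"
  using veldkamp_ngon by (simp add: veldkamp_ngon_def)

lemma adj_sym: "adj x y \<Longrightarrow> adj y x"
  and adj_in_V1: "adj x y \<Longrightarrow> x \<in> V"
  and adj_in_V2: "adj x y \<Longrightarrow> y \<in> V"
  using veldkamp_ngon by (auto simp: veldkamp_ngon_def veldkamp_graph_def graph_def)

lemma opp_sym: "v \<in> V \<Longrightarrow> opp v x y \<Longrightarrow> opp v y x"
  and opp_neq: "v \<in> V \<Longrightarrow> opp v x y \<Longrightarrow> x \<noteq> y"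
  using veldkamp_ngon by (fastforce simp: veldkamp_ngon_def veldkamp_graph_def opposition_rel_def)+

lemma opposite_to_two:
  assumes "v \<in> V" "S \<subseteq> nbrs adj v" "finite S" "card S \<le> 2"
  shows "\<exists>y. adj v y \<and> (\<forall>x\<in>S. opp v x y)"
proof -
  have "plump 2 (nbrs adj v) (opp v)"
    using veldkamp_ngon assms(1) by (simp add: veldkamp_ngon_def veldkamp_graph_def)
  then obtain y where "y \<in> nbrs adj v" "\<forall>x\<in>S. opp v y x"
    using assms(2-) unfolding plump_def by blast
  then show ?thesis using opp_sym[OF assms(1)] by (auto simp: nbrs_def)
qed

lemma opposite_to_pair:
  assumes "adj v a" "adj v b"
  shows "\<exists>y. adj v y \<and> opp v a y \<and> opp v b y"
  using opposite_to_two[OF adj_in_V1[OF assms(1)], of "{a, b}"] assms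
  by (auto simp: nbrs_def card_insert_le_m1)

definition straight_path :: "'a list \<Rightarrow> nat \<Rightarrow> 'a \<Rightarrow> 'a \<Rightarrow> bool" where
  "straight_path p k x z \<longleftrightarrow> is_path V adj p k \<and> straight opp p \<and> p ! 0 = x \<and> p ! k = z"

lemma straight_path_singleton: "x \<in> V \<Longrightarrow> straight_path [x] 0 x x"
  by (simp add: straight_path_def is_path_def straight_def)

lemma straight_path_edge: "adj x y \<Longrightarrow> straight_path [x, y] 1 x y"
  using adj_in_V1 adj_in_V2 by (auto simp: straight_path_def is_path_def straight_def less_Suc_eq)

lemma straight_path_ends_in_V: "straight_path p k x z \<Longrightarrow> x \<in> V \<and> z \<in> V"
  unfolding straight_path_def using is_path_nth_in_V by fastforce

lemma straight_path_last_adj: "straight_path p k x z \<Longrightarrow> 0 < k \<Longrightarrow> adj z (p ! (k - 1))"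
  unfolding straight_path_def using is_path_adj[of V adj p k "k - 1"] adj_sym by simp

lemma straight_path_first_adj: "straight_path p k x z \<Longrightarrow> 0 < k \<Longrightarrow> adj x (p ! 1)"
  unfolding straight_path_def using is_path_adj[of V adj p k 0] by simp

lemma straight_path_snoc:
  assumes "straight_path p k x z" "adj z y" "0 < k \<Longrightarrow> opp z (p ! (k - 1)) y"
  shows "straight_path (p @ [y]) (Suc k) x y"
proof -
  have "z \<in> V" using adj_in_V1[OF assms(2)] .
  then have "is_path V adj (p @ [y]) (Suc k)"
    using assms opp_neq adj_in_V2 by (intro is_path_snoc) (auto simp: straight_path_def)
  moreover have "straight opp (p @ [y])"
    using assms by (intro straight_snoc[of _ _ k]) (auto simp: straight_path_def is_path_length)
  moreover have "length p = Suc k"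
    using assms(1) is_path_length by (auto simp: straight_path_def)
  ultimately show ?thesis
    using assms(1) by (simp add: straight_path_def nth_append)
qed

lemma straight_path_Cons:
  assumes "straight_path p k x z" "adj w x" "0 < k \<Longrightarrow> opp x w (p ! 1)"
  shows "straight_path (w # p) (Suc k) w z"
proof -
  have "x \<in> V" using adj_in_V2[OF assms(2)] .
  then have "is_path V adj (w # p) (Suc k)"
    using assms opp_neq adj_in_V1 by (intro is_path_Cons) (auto simp: straight_path_def)
  moreover have "straight opp (w # p)"
    using assms by (intro straight_Cons) (auto simp: straight_path_def is_path_length)
  ultimately show ?thesis
    using assms(1) by (simp add: straight_path_def)
qed

lemma straight_path_unique:
  assumes "1 \<le> k" "k < n" "straight_path p k x z" "straight_path q j x z" "j \<le> k"
  shows "q = p"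
proof -
  have "hd q = hd p" "last q = last p"
    using assms(3,4) by (auto simp: straight_path_def is_path_hd is_path_last)
  moreover have "1 \<le> k \<and> k \<le> n - 1 \<longrightarrow> (\<forall>p. is_path V adj p k \<and> straight opp p \<longrightarrow>
      (\<forall>q j. is_path V adj q j \<and> j \<le> k \<and> straight opp q \<and> hd q = hd p \<and> last q = last p \<longrightarrow> q = p))"
    using veldkamp_ngon unfolding veldkamp_ngon_def by blast
  ultimately show ?thesis
    using assms by (auto simp: straight_path_def)
qed

lemma straight_circuit_through:
  assumes "is_path V adj p (Suc n)" "straight opp p"
  obtains c where "closed_path V adj c (2 * n)" "straight_circuit V adj opp c" "path_in_circuit c p"
  using veldkamp_ngon assms unfolding veldkamp_ngon_def by auto

end

locale apartment = veldkamp_polygon +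
  fixes c :: "'a list"
  assumes closed: "closed_path V adj c (2 * n)"
    and straight_c: "straight_circuit V adj opp c"
begin

text \<open>The vertices of c are indexed by integers modulo 2n, so that arcs running in
  either direction d = 1 or d = -1 are handled uniformly.\<close>

abbreviation N :: int where "N \<equiv> 2 * int n"

definition vertex :: "int \<Rightarrow> 'a" where
  "vertex i = c ! nat (i mod N)"

definition arc :: "int \<Rightarrow> int \<Rightarrow> nat \<Rightarrow> 'a list" where
  "arc a d k = map (\<lambda>i. vertex (a + d * int i)) [0..<Suc k]"

lemma c_path: "is_path V adj c (2 * n)"
  using closed by (simp add: closed_path_def)

lemma mod_N_bounds: "0 \<le> i mod N" "i mod N < N"
  using two_le_n by simp_all

lemma vertex_cong: "i mod N = j mod N \<Longrightarrow> vertex i = vertex j"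
  by (simp add: vertex_def)

lemma vertex_nth:
  assumes "0 \<le> i" "i \<le> N"
  shows "vertex i = c ! nat i"
proof (cases "i = N")
  case True
  then show ?thesis using closed by (simp add: vertex_def closed_path_def nat_mult_distrib)
qed (use assms in \<open>simp add: vertex_def\<close>)

lemma vertex_plus_one: "vertex (i + 1) = c ! Suc (nat (i mod N))"
proof -
  have "vertex (i + 1) = vertex (i mod N + 1)"
    by (rule vertex_cong) (simp add: mod_add_left_eq)
  also have "\<dots> = c ! Suc (nat (i mod N))"
    using mod_N_bounds[of i] by (subst vertex_nth) (auto simp: nat_add_distrib)
  finally show ?thesis .
qed

lemma vertex_in_V: "vertex i \<in> V"
  using is_path_nth_in_V[OF c_path, of "nat (i mod N)"] mod_N_bounds[of i]
  by (simp add: vertex_def)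

lemma vertex_adj: "adj (vertex i) (vertex (i + 1))"
  using is_path_adj[OF c_path, of "nat (i mod N)"] mod_N_bounds[of i] vertex_plus_one[of i]
  by (simp add: vertex_def nat_less_iff)

lemma vertex_edge: "{vertex i, vertex (i + 1)} \<in> circ_edges c"
  using is_path_length[OF c_path] mod_N_bounds[of i] vertex_plus_one[of i]
  unfolding circ_edges_def by (auto simp: vertex_def nat_less_iff intro!: exI[of _ "nat (i mod N)"])

lemma vertex_in_c: "vertex i \<in> set c"
  using is_path_length[OF c_path] mod_N_bounds[of i] by (simp add: vertex_def nat_less_iff)

lemma vertex_adj_step: "\<bar>d\<bar> = 1 \<Longrightarrow> adj (vertex i) (vertex (i + d))"
  using vertex_adj[of i] adj_sym[OF vertex_adj[of "i - 1"]] by (auto dest: unit_cases)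

lemma vertex_edge_step: "\<bar>d\<bar> = 1 \<Longrightarrow> {vertex i, vertex (i + d)} \<in> circ_edges c"
  using vertex_edge[of i] vertex_edge[of "i - 1"] by (auto dest!: unit_cases simp: insert_commute)

lemma arc_length [simp]: "length (arc a d k) = Suc k"
  by (simp add: arc_def)

lemma arc_nth [simp]: "i \<le> k \<Longrightarrow> arc a d k ! i = vertex (a + d * int i)"
  by (simp add: arc_def nth_map_upt del: upt_Suc)

lemma arc_in_circuit:
  assumes "\<bar>d\<bar> = 1"
  shows "path_in_circuit c (arc a d k)"
  unfolding path_in_circuit_def
proof (intro conjI allI impI)
  show "set (arc a d k) \<subseteq> set c"
    using vertex_in_c by (auto simp: arc_def)
  fix i assume "Suc i < length (arc a d k)"
  then show "{arc a d k ! i, arc a d k ! Suc i} \<in> circ_edges c"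
    using vertex_edge_step[OF assms, of "a + d * int i"] by (simp add: algebra_simps)
qed

lemma arc_is_path:
  assumes "\<bar>d\<bar> = 1" "\<And>i. i + 2 \<le> k \<Longrightarrow> vertex (a + d * int i) \<noteq> vertex (a + d * int (i + 2))"
  shows "is_path V adj (arc a d k) k"
  unfolding is_path_def
proof (intro conjI allI impI)
  fix i assume i: "2 \<le> i \<and> i \<le> k"
  then have "i - 2 + 2 \<le> k" by arith
  then have "vertex (a + d * int (i - 2)) \<noteq> vertex (a + d * int i)"
    using assms(2)[of "i - 2"] i by simp
  moreover have "i - 2 \<le> k" using i by arith
  ultimately show "arc a d k ! (i - 2) \<noteq> arc a d k ! i"
    using i by simp
next
  fix i assume "i < k"
  then show "adj (arc a d k ! i) (arc a d k ! Suc i)"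
    using vertex_adj_step[OF assms(1), of "a + d * int i"] by (simp add: algebra_simps)
qed (use vertex_in_V in \<open>auto simp: arc_def\<close>)

lemma arc_straight_pathI:
  assumes "\<bar>d\<bar> = 1" "is_path V adj (arc a d k) k"
  shows "straight_path (arc a d k) k (vertex a) (vertex (a + d * int k))"
  using assms arc_in_circuit straight_c by (auto simp: straight_path_def straight_circuit_def)

lemma vertex_no_backtrack_within:
  assumes "0 \<le> i" "i + 2 \<le> N"
  shows "vertex i \<noteq> vertex (i + 2)"
  using is_path_no_backtrack[OF c_path, of "nat i + 2"] assms
  by (simp add: vertex_nth nat_add_distrib)

text \<open>A closed path need not be non-backtracking at its closing vertex c!0 = c!(2n);
  here VP2 rules this out.\<close>

lemma vertex_no_backtrack_at_closing: "vertex 1 \<noteq> vertex (N - 1)"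
proof
  assume eq: "vertex 1 = vertex (N - 1)"
  define A where "A = arc 1 1 (n - 1)"
  define B where "B = arc (N - 1) (-1) (n - 1)"
  have "is_path V adj A (n - 1)"
    unfolding A_def using two_le_n vertex_no_backtrack_within[of "1 + int _"]
    by (intro arc_is_path) (auto simp: algebra_simps)
  then have A: "straight_path A (n - 1) (vertex 1) (vertex (int n))"
    using arc_straight_pathI[of 1 1 "n - 1"] two_le_n by (simp add: A_def)
  have "is_path V adj B (n - 1)"
    unfolding B_def
  proof (rule arc_is_path)
    fix i assume "i + 2 \<le> n - 1"
    then have "vertex (N - 3 - int i) \<noteq> vertex (N - 3 - int i + 2)"
      by (intro vertex_no_backtrack_within) auto
    then show "vertex (N - 1 + - 1 * int i) \<noteq> vertex (N - 1 + - 1 * int (i + 2))"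
      by (simp add: algebra_simps)
  qed simp
  then have B: "straight_path B (n - 1) (vertex 1) (vertex (int n))"
    using arc_straight_pathI[of "-1" "N - 1" "n - 1"] two_le_n eq by (simp add: B_def)
  have "B = A"
    using straight_path_unique[OF _ _ A B] two_le_n by simp
  moreover have "A ! (n - 2) = vertex (int n - 1)"
    using two_le_n by (simp add: A_def)
  moreover have "B ! (n - 2) = vertex (1 + int n)"
    using two_le_n by (simp add: B_def)
  ultimately have "vertex (int n - 1) = vertex (int n - 1 + 2)"
    by (simp add: algebra_simps)
  then show False
    using vertex_no_backtrack_within[of "int n - 1"] two_le_n by simp
qed

lemma vertex_mod_add: "vertex (i mod N + t) = vertex (i + t)"
  by (rule vertex_cong) (simp add: mod_add_left_eq)

lemma vertex_no_backtrack: "vertex i \<noteq> vertex (i + 2)"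
proof (cases "i mod N + 2 \<le> N")
  case True
  then show ?thesis
    using vertex_no_backtrack_within[of "i mod N"] mod_N_bounds[of i] vertex_mod_add[of i]
    by (metis add_0_right)
next
  case False
  then have "i mod N = N - 1"
    using mod_N_bounds[of i] by simp
  then have "vertex i = vertex (N - 1)" "vertex (i + 2) = vertex 1"
    using vertex_mod_add[of i 0] vertex_mod_add[of i 2] vertex_cong[of "N - 1 + 2" 1] two_le_n
    by auto
  then show ?thesis
    using vertex_no_backtrack_at_closing by simp
qed

lemma vertex_no_backtrack_step: "\<bar>d\<bar> = 1 \<Longrightarrow> vertex i \<noteq> vertex (i + 2 * d)"
  using vertex_no_backtrack[of i] vertex_no_backtrack[of "i - 2"] by (auto dest!: unit_cases)

lemma arc_straight_path:
  assumes "\<bar>d\<bar> = 1"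
  shows "straight_path (arc a d k) k (vertex a) (vertex (a + d * int k))"
proof -
  have "is_path V adj (arc a d k) k"
  proof (rule arc_is_path[OF assms])
    fix i
    show "vertex (a + d * int i) \<noteq> vertex (a + d * int (i + 2))"
      using vertex_no_backtrack_step[OF assms, of "a + d * int i"] by (simp add: algebra_simps)
  qed
  then show ?thesis
    using arc_straight_pathI[OF assms] by simp
qed

lemma vertex_no_short_cycle:
  assumes "1 \<le> d" "d \<le> n"
  shows "vertex s \<noteq> vertex (s + int d)"
proof
  assume eq: "vertex s = vertex (s + int d)"
  show False
  proof (cases "d < n")
    case True
    have "straight_path [vertex s] 0 (vertex s) (vertex s)"
      using straight_path_singleton vertex_in_V by blast
    moreover have "straight_path (arc s 1 d) d (vertex s) (vertex s)"
      using arc_straight_path[of 1 s d] eq by simp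
    ultimately have "[vertex s] = arc s 1 d"
      using straight_path_unique[OF assms(1) True] by blast
    then have "length [vertex s] = Suc d"
      by simp
    then show False
      using assms(1) by simp
  next
    case False
    then have d: "d = n" using assms(2) by simp
    have "straight_path [vertex (s + 1), vertex s] 1 (vertex (s + 1)) (vertex s)"
      using straight_path_edge adj_sym[OF vertex_adj[of s]] by blast
    moreover have "straight_path (arc (s + 1) 1 (n - 1)) (n - 1) (vertex (s + 1)) (vertex s)"
      using arc_straight_path[of 1 "s + 1" "n - 1"] eq two_le_n d by (simp add: algebra_simps)
    ultimately have "[vertex (s + 1), vertex s] = arc (s + 1) 1 (n - 1)"
      using straight_path_unique[of "n - 1"] two_le_n by simp
    then have "[vertex (s + 1), vertex s] ! 1 = arc (s + 1) 1 (n - 1) ! 1"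
      by simp
    then have "vertex s = vertex (s + 2)"
      using two_le_n by (simp add: algebra_simps)
    then show False
      using vertex_no_backtrack by simp
  qed
qed

lemma vertex_inj_below:
  assumes "0 \<le> x" "x < y" "y < N"
  shows "vertex x \<noteq> vertex y"
proof (cases "y - x \<le> int n")
  case True
  then show ?thesis
    using vertex_no_short_cycle[of "nat (y - x)" x] assms by simp
next
  case False
  have d: "1 \<le> nat (N - (y - x))" "nat (N - (y - x)) \<le> n"
    using assms False by linarith+
  have "vertex (y + int (nat (N - (y - x)))) = vertex (x + N)"
    using assms by (simp add: add.commute)
  also have "\<dots> = vertex x"
    by (rule vertex_cong) simp
  finally show ?thesis
    using vertex_no_short_cycle[OF d, of y] by simp
qed

lemma vertex_eq_iff: "vertex i = vertex j \<longleftrightarrow> i mod N = j mod N"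
proof
  assume "vertex i = vertex j"
  then have "vertex (i mod N) = vertex (j mod N)"
    using vertex_mod_add[of _ 0] by simp
  then show "i mod N = j mod N"
    using vertex_inj_below[of "i mod N" "j mod N"] vertex_inj_below[of "j mod N" "i mod N"]
      mod_N_bounds[of i] mod_N_bounds[of j]
    by (cases "i mod N" "j mod N" rule: linorder_cases) auto
qed (rule vertex_cong)

lemma vertex_shift: "vertex i = vertex j \<Longrightarrow> vertex (i + t) = vertex (j + t)"
  using mod_add_cong[of i N j t t] by (simp add: vertex_eq_iff)

lemma circ_edge_vertex:
  assumes "e \<in> circ_edges c"
  obtains r where "e = {vertex r, vertex (r + 1)}"
proof -
  obtain i where "e = {c ! i, c ! Suc i}" "i < 2 * n"
    using assms is_path_length[OF c_path] by (auto simp: circ_edges_def)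
  then show ?thesis
    using vertex_nth[of "int i"] vertex_nth[of "int i + 1"]
    by (intro that[of "int i"]) (simp add: nat_add_distrib)
qed

lemma circ_edge_neighbour:
  assumes "\<bar>d\<bar> = 1" "{vertex r, x} \<in> circ_edges c"
  shows "x = vertex (r + d) \<or> x = vertex (r - d)"
proof -
  obtain i where "{vertex r, x} = {vertex i, vertex (i + 1)}"
    using circ_edge_vertex[OF assms(2)] by blast
  then have "x = vertex (r + 1) \<or> x = vertex (r + - 1)"
    using vertex_shift[of r i 1] vertex_shift[of r "i + 1" "- 1"]
    by (auto simp: doubleton_eq_iff)
  then show ?thesis
    using unit_cases[OF assms(1)] by auto
qed

lemma path_in_apartment_is_arc:
  assumes p: "is_path V adj p k" "path_in_circuit c p" and k: "1 \<le> k"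
  obtains a d where "\<bar>d\<bar> = 1" "\<And>i. i \<le> k \<Longrightarrow> p ! i = vertex (a + d * int i)"
proof -
  have edge: "{p ! i, p ! Suc i} \<in> circ_edges c" if "i < k" for i
    using p that by (auto simp: path_in_circuit_def is_path_length)
  obtain r where "{p ! 0, p ! 1} = {vertex r, vertex (r + 1)}"
    using edge[of 0] k circ_edge_vertex by auto
  then obtain a d where d: "\<bar>d\<bar> = 1" and start: "p ! 0 = vertex a" "p ! 1 = vertex (a + d)"
  proof (cases "p ! 0 = vertex r")
    case True
    then show ?thesis using that[of 1 r] \<open>{p ! 0, p ! 1} = _\<close> by (auto simp: doubleton_eq_iff)
  next
    case False
    then show ?thesis using that[of "- 1" "r + 1"] \<open>{p ! 0, p ! 1} = _\<close> by (auto simp: doubleton_eq_iff)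
  qed
  have along: "p ! i = vertex (a + d * int i) \<and> p ! Suc i = vertex (a + d * int (Suc i))"
    if "i < k" for i
    using that
  proof (induction i)
    case (Suc i)
    then have IH: "p ! i = vertex (a + d * int i)" "p ! Suc i = vertex (a + d * int i + d)"
      by (simp_all add: algebra_simps)
    have "p ! Suc (Suc i) = vertex (a + d * int i + d + d) \<or> p ! Suc (Suc i) = vertex (a + d * int i)"
      using circ_edge_neighbour[OF d, of "a + d * int i + d"] edge[OF Suc.prems] IH by simp
    moreover have "p ! i \<noteq> p ! Suc (Suc i)"
      using is_path_no_backtrack[OF p(1), of "Suc (Suc i)"] Suc.prems by simp
    ultimately show ?case
      using IH by (simp add: algebra_simps)
  qed (use start in simp)
  show ?thesis
  proof (rule that[OF d])
    fix i assume "i \<le> k"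
    then show "p ! i = vertex (a + d * int i)"
      using along[of i] along[of "k - 1"] k by (cases "i < k") auto
  qed
qed

text \<open>Read backwards from p!1 through p!0, the circuit reaches p!(n+1) after n steps
  because it has length 2n.\<close>

lemma rotate_in_apartment:
  assumes "is_path V adj p (Suc n)" "path_in_circuit c p"
  shows "\<exists>q. straight_path q n (p ! 1) (p ! Suc n) \<and> q ! 1 = p ! 0"
proof -
  obtain a d where d: "\<bar>d\<bar> = 1" and p: "\<And>i. i \<le> Suc n \<Longrightarrow> p ! i = vertex (a + d * int i)"
    by (rule path_in_apartment_is_arc[OF assms]) auto
  have "vertex (a + d + - d * int n) = vertex (a + d * int (Suc n))"
    using mod_mult_self1[of "a + d + - d * int n" d N] by (intro vertex_cong) (simp add: algebra_simps)
  then have "straight_path (arc (a + d) (- d) n) n (p ! 1) (p ! Suc n)"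
    using arc_straight_path[of "- d" "a + d" n] d p by simp
  moreover have "arc (a + d) (- d) n ! 1 = p ! 0"
    using two_le_n p by simp
  ultimately show ?thesis
    by blast
qed

end

context veldkamp_polygon
begin

lemma straight_path_rotate:
  assumes "straight_path p (Suc n) x z"
  shows "\<exists>q. straight_path q n (p ! 1) z \<and> q ! 1 = x"
proof -
  obtain c where "closed_path V adj c (2 * n)" "straight_circuit V adj opp c" "path_in_circuit c p"
    using straight_circuit_through assms unfolding straight_path_def by blast
  then interpret apartment V adj opp n c
    by unfold_locales
  show ?thesis
    using rotate_in_apartment assms \<open>path_in_circuit c p\<close> unfolding straight_path_def by blast
qed

lemma straight_path_shortcut:
  assumes "straight_path p (Suc n) x z"
  shows "\<exists>q. straight_path q (n - 1) x z"
proof -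
  obtain q where q: "straight_path q n (p ! 1) z" "q ! 1 = x"
    using straight_path_rotate[OF assms] by blast
  have n: "n = Suc (n - 1)"
    using two_le_n by simp
  have "straight_path (tl q) (n - 1) x z"
    using q is_path_tl[of V adj q "n - 1"] straight_tl n
    by (auto simp: straight_path_def is_path_length nth_tl)
  then show ?thesis ..
qed

lemma straight_path_grow:
  assumes "straight_path p k x z" "k \<le> n" "adj z y" "0 < k \<Longrightarrow> opp z (p ! (k - 1)) y"
  shows "\<exists>q. straight_path q (grow n k) x y"
proof (cases "k < n")
  case True
  then show ?thesis
    using straight_path_snoc[OF assms(1,3,4)] by (auto simp: grow_def)
next
  case False
  then show ?thesis
    using straight_path_shortcut straight_path_snoc[OF assms(1,3,4)] assms(2) by (auto simp: grow_def)
qed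

lemma common_extension_step:
  assumes "straight_path p1 k1 x1 z" "straight_path p2 k2 x2 z" "k1 \<le> n" "k2 \<le> n"
  shows "\<exists>y q1 q2. straight_path q1 (grow n k1) x1 y \<and> straight_path q2 (grow n k2) x2 y"
proof -
  let ?S = "{w. (0 < k1 \<and> w = p1 ! (k1 - 1)) \<or> (0 < k2 \<and> w = p2 ! (k2 - 1))}"
  have S: "?S \<subseteq> {p1 ! (k1 - 1), p2 ! (k2 - 1)}"
    by auto
  then have "finite ?S" "card ?S \<le> 2"
    using finite_subset card_mono[OF _ S] card_insert_le_m1[of 2 "{p2 ! (k2 - 1)}" "p1 ! (k1 - 1)"]
    by fastforce+
  moreover have "?S \<subseteq> nbrs adj z"
    using straight_path_last_adj[OF assms(1)] straight_path_last_adj[OF assms(2)] by (auto simp: nbrs_def)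
  ultimately obtain y where y: "adj z y" "\<forall>w\<in>?S. opp z w y"
    using opposite_to_two straight_path_ends_in_V[OF assms(1)] by blast
  obtain q1 where "straight_path q1 (grow n k1) x1 y"
    using straight_path_grow[OF assms(1,3) y(1)] y(2) by auto
  moreover obtain q2 where "straight_path q2 (grow n k2) x2 y"
    using straight_path_grow[OF assms(2,4) y(1)] y(2) by auto
  ultimately show ?thesis
    by blast
qed

lemma common_extension:
  assumes "straight_path p1 k1 x1 z" "straight_path p2 k2 x2 z" "k1 \<le> n" "k2 \<le> n"
  shows "\<exists>y q1 q2. straight_path q1 ((grow n ^^ m) k1) x1 y \<and> straight_path q2 ((grow n ^^ m) k2) x2 y"
proof (induction m)
  case (Suc m)
  then obtain y q1 q2 where
    "straight_path q1 ((grow n ^^ m) k1) x1 y" "straight_path q2 ((grow n ^^ m) k2) x2 y"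
    by blast
  then show ?case
    using common_extension_step grow_funpow_le assms(3,4) by simp
qed (use assms in auto)

lemma straight_path_turn:
  assumes "straight_path r n w z" "adj w x"
  shows "\<exists>r'. straight_path r' n w z \<and> r' ! 1 = x"
proof -
  have n: "0 < n"
    using two_le_n by simp
  obtain m where m: "adj w m" "opp w (r ! 1) m" "opp w x m"
    using opposite_to_pair[OF straight_path_first_adj[OF assms(1) n] assms(2)] by blast
  have "straight_path (m # r) (Suc n) m z"
    using straight_path_Cons[OF assms(1)] m adj_sym opp_sym adj_in_V1 by blast
  then obtain q where q: "straight_path q n w z" "q ! 1 = m"
    using straight_path_rotate assms(1) by (force simp: straight_path_def)
  have "straight_path (x # q) (Suc n) x z"
    using straight_path_Cons[OF q(1)] q(2) m assms(2) adj_sym by blast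
  then show ?thesis
    using straight_path_rotate q(1) by (force simp: straight_path_def)
qed

definition converge :: "'a \<Rightarrow> 'a \<Rightarrow> bool" where
  "converge u v \<longleftrightarrow>
     (\<exists>z k1 k2 p1 p2. k1 \<le> n \<and> k2 \<le> n \<and> straight_path p1 k1 u z \<and> straight_path p2 k2 v z)"

lemma converge_refl: "u \<in> V \<Longrightarrow> converge u u"
  unfolding converge_def using straight_path_singleton by blast

lemma converge_step:
  assumes "converge u w" "adj w v"
  shows "converge u v"
proof -
  obtain z k1 k2 p1 p2 where p: "k1 \<le> n" "k2 \<le> n" "straight_path p1 k1 u z" "straight_path p2 k2 w z"
    using assms(1) unfolding converge_def by blast
  obtain z' q1 r where q1: "straight_path q1 ((grow n ^^ (n - k2)) k1) u z'"
    and r: "straight_path r n w z'"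
    using common_extension[OF p(3,4,1,2), of "n - k2"] p(2) by (auto simp: grow_funpow)
  obtain x where x: "adj w x" "opp w v x"
    using opposite_to_pair[OF assms(2) assms(2)] by blast
  obtain r' where "straight_path r' n w z'" "r' ! 1 = x"
    using straight_path_turn[OF r x(1)] by blast
  then have "straight_path (v # r') (Suc n) v z'"
    using straight_path_Cons adj_sym[OF assms(2)] x(2) by blast
  then obtain q2 where "straight_path q2 (n - 1) v z'"
    using straight_path_shortcut by blast
  moreover have "(grow n ^^ (n - k2)) k1 \<le> n" "n - 1 \<le> n"
    using grow_funpow_le[OF p(1)] by auto
  ultimately show ?thesis
    unfolding converge_def using q1 by blast
qed

lemma converge_connected: "u \<in> V \<Longrightarrow> v \<in> V \<Longrightarrow> converge u v"
proof -
  assume uv: "u \<in> V" "v \<in> V"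
  obtain xs where xs: "walk V adj xs" "hd xs = u" "last xs = v"
    using veldkamp_ngon uv unfolding veldkamp_ngon_def connected_graph_def by blast
  have "converge u (xs ! i)" if "i < length xs" for i
    using that
  proof (induction i)
    case 0
    then show ?case using converge_refl uv(1) xs(2) by (simp add: hd_conv_nth)
  next
    case (Suc i)
    then show ?case using converge_step xs(1) by (simp add: walk_def)
  qed
  moreover have "xs \<noteq> []"
    using xs(1) by (simp add: walk_def)
  ultimately show ?thesis
    using xs(3) last_conv_nth[of xs] by (metis diff_less length_greater_0_conv zero_less_one)
qed

lemma two_colouring:
  obtains col :: "'a \<Rightarrow> bool" where "\<And>x y. adj x y \<Longrightarrow> col x \<noteq> col y"
  using veldkamp_ngon unfolding veldkamp_ngon_def bipartite_graph_def by blast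

lemma straight_path_colour_parity:
  fixes col :: "'a \<Rightarrow> bool"
  assumes "\<And>x y. adj x y \<Longrightarrow> col x \<noteq> col y" "straight_path p k x z"
  shows "col z \<longleftrightarrow> (col x \<longleftrightarrow> even k)"
  using two_colouring_parity[where adj = adj and col = col and xs = p and i = k] assms
  by (auto simp: straight_path_def is_path_def)

lemma common_opposite_vertex_of_same_colour:
  fixes col :: "'a \<Rightarrow> bool"
  assumes "\<And>x y. adj x y \<Longrightarrow> col x \<noteq> col y" "u \<in> V" "v \<in> V" "col u = col v"
  shows "\<exists>z r1 r2. straight_path r1 n u z \<and> straight_path r2 n v z"
proof -
  obtain z k1 k2 p1 p2 where p: "k1 \<le> n" "k2 \<le> n" "straight_path p1 k1 u z" "straight_path p2 k2 v z"
    using converge_connected[OF assms(2,3)] unfolding converge_def by blast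
  have "even (k1 + k2)"
    using straight_path_colour_parity[where col = col, OF assms(1) p(3)]
      straight_path_colour_parity[where col = col, OF assms(1) p(4)] assms(4)
    by auto
  then show ?thesis
    using common_extension[OF p(3,4,1,2), of "n + k1"] grow_funpow_eq_top p(1,2) by simp
qed

lemma straight_path_root_opposite: "straight_path r n u z \<Longrightarrow> z \<in> op_set V adj opp n u"
  unfolding op_set_def root_def straight_path_def using is_path_hd is_path_last by blast

lemma opposite_edges_snoc:
  assumes "straight_path r n a z" "adj z y" "opp z (r ! (n - 1)) y"
  shows "opposite_edges V adj opp n {a, r ! 1} {z, y}"
proof -
  have "straight_path (r @ [y]) (Suc n) a y"
    using straight_path_snoc[OF assms] .
  moreover have "length r = Suc n"
    using assms(1) is_path_length by (auto simp: straight_path_def)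
  ultimately show ?thesis
    using assms(1) two_le_n unfolding opposite_edges_def straight_path_def
    by (intro exI[of _ "r @ [y]"]) (simp add: nth_append)
qed

lemma common_opposite_edge:
  assumes "e1 \<in> graph_edges adj" "e2 \<in> graph_edges adj"
  shows "\<exists>e\<in>graph_edges adj. opposite_edges V adj opp n e1 e \<and> opposite_edges V adj opp n e2 e"
proof -
  obtain col :: "'a \<Rightarrow> bool" where col: "\<And>x y. adj x y \<Longrightarrow> col x \<noteq> col y"
    using two_colouring by blast
  obtain a1 b1 where e1: "e1 = {a1, b1}" "adj a1 b1"
    using assms(1) by (auto simp: graph_edges_def)
  obtain a2 b2 where e2: "e2 = {a2, b2}" "adj a2 b2" "col a2 = col a1"
  proof -
    obtain x y where "e2 = {x, y}" "adj x y"
      using assms(2) by (auto simp: graph_edges_def)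
    then show ?thesis
      using that[of x y] that[of y x] col adj_sym
      by (cases "col x = col a1") (auto simp: insert_commute)
  qed
  obtain z r1 r2 where "straight_path r1 n a1 z" "straight_path r2 n a2 z"
    using common_opposite_vertex_of_same_colour[where col = col, OF col] e1(2) e2(2,3) adj_in_V1
    by metis
  then obtain r1' r2' where r1': "straight_path r1' n a1 z" "r1' ! 1 = b1"
    and r2': "straight_path r2' n a2 z" "r2' ! 1 = b2"
    using straight_path_turn e1(2) e2(2) by meson
  have n: "0 < n"
    using two_le_n by simp
  obtain y where y: "adj z y" "opp z (r1' ! (n - 1)) y" "opp z (r2' ! (n - 1)) y"
    using opposite_to_pair straight_path_last_adj[OF r1'(1) n] straight_path_last_adj[OF r2'(1) n]
    by blast
  have "{z, y} \<in> graph_edges adj"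
    using y(1) by (auto simp: graph_edges_def)
  then show ?thesis
    using opposite_edges_snoc[OF r1'(1) y(1,2)] opposite_edges_snoc[OF r2'(1) y(1,3)] e1 e2 r1' r2'
    by auto
qed

lemma common_opposite_vertex:
  assumes "u \<in> V" "v \<in> V" "even (gdist V adj u v)"
  shows "op_set V adj opp n u \<inter> op_set V adj opp n v \<noteq> {}"
proof -
  obtain col :: "'a \<Rightarrow> bool" where col: "\<And>x y. adj x y \<Longrightarrow> col x \<noteq> col y"
    using two_colouring by blast
  have "col u = col v"
    using gdist_even_same_colour[where col = col, OF _ col assms] veldkamp_ngon
    by (simp add: veldkamp_ngon_def)
  then show ?thesis
    using common_opposite_vertex_of_same_colour[where col = col, OF col assms(1,2)]
      straight_path_root_opposite
    by blast
qed

end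

theorem proposition2p12:
  fixes V :: "'a set" and adj :: "'a \<Rightarrow> 'a \<Rightarrow> bool" and opp :: "'a \<Rightarrow> 'a \<Rightarrow> 'a \<Rightarrow> bool" and n :: nat
  assumes "veldkamp_ngon V adj opp n" and "2 \<le> n"
  shows "(\<forall>e1\<in>graph_edges adj. \<forall>e2\<in>graph_edges adj. \<exists>e\<in>graph_edges adj.
            opposite_edges V adj opp n e1 e \<and> opposite_edges V adj opp n e2 e)
       \<and> (\<forall>u\<in>V. \<forall>v\<in>V. even (gdist V adj u v) \<longrightarrow> op_set V adj opp n u \<inter> op_set V adj opp n v \<noteq> {})"
proof -
  interpret veldkamp_polygon V adj opp n
    using assms(1) by unfold_locales
  show ?thesis
    using common_opposite_edge common_opposite_vertex by blast
qed

end
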